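(* Let $G$ be a connected weighted multigraph on the vertex set $V$, $|V|=n\ge2$, with positive edge weights, weighted adjacency matrix $A$, spectral radius $\rho$ and Perron vector $p$; let $P=\operatorname{diag}p$. For $j\in V$ let $A_{\tilde j\tilde j}$ be the $n\times n$ matrix obtained from $A$ by replacing all entries of row $j$ and column $j$ by zero. Then for all distinct $i,j\in V$, $$d^{LW}(i,j)=\frac{\|p\|_2^2}{n}\Bigl[\bigl((\rho I-A_{\tilde j\tilde j})P\bigr)^{-1}_i+\bigl((\rho I-A_{\tilde i\tilde i})P\bigr)^{-1}_j\Bigr]\mathbf 1,$$ where $N^{-1}_i$ denotes the row of $N^{-1}$ indexed by $i$ and $\mathbf 1$ is the vector of $n$ ones.
   Context: Loops and multiple edges are allowed; $A=(a_{ij})$ has $a_{ij}$ equal to the sum of weights of the edges joining $i$ and $j$. The Perron vector $p$ is the positive eigenvector of $A$ for $\rho$ with entries summing to 1. The long walk distance is $d^{LW}(i,j)=\lim_{\alpha\to\infty}\theta\bigl(\tfrac12(\ln r_{ii}+\ln r_{jj})-\ln r_{ij}\bigr)$, where $(r_{ij})=(I-tA)^{-1}$, $t=(\rho+\alpha^{-1})^{-1}$, $\theta=\ln(e+\alpha^{2/n})\frac{\alpha-1}{\ln\alpha}$. *)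

theory Defs
  imports "HOL-Analysis.Analysis"
begin

text \<open>Spectral radius of a real square matrix, taken over its real eigenvalues.
  For the symmetric matrices considered here all eigenvalues are real, so this is
  the usual spectral radius.\<close>
definition spec_radius :: "real^'n^'n \<Rightarrow> real" where
  "spec_radius A = Max {\<bar>c\<bar> | c. \<exists>v. v \<noteq> 0 \<and> A *v v = c *\<^sub>R v}"

definition adj_connected :: "real^'n^'n \<Rightarrow> bool" where
  "adj_connected A \<longleftrightarrow> (\<forall>i j. (i, j) \<in> {(a, b). A $ a $ b \<noteq> 0}\<^sup>*)"

definition diag_mat :: "real^'n \<Rightarrow> real^'n^'n" where
  "diag_mat p = (\<chi> a b. if a = b then p $ a else 0)"

definition del_rc :: "real^'n^'n \<Rightarrow> 'n \<Rightarrow> real^'n^'n" where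
  "del_rc A j = (\<chi> a b. if a = j \<or> b = j then 0 else A $ a $ b)"

definition lw_resolvent :: "real^'n^'n \<Rightarrow> real \<Rightarrow> real^'n^'n" where
  "lw_resolvent A \<alpha> = matrix_inv (mat 1 - inverse (spec_radius A + inverse \<alpha>) *\<^sub>R A)"

definition lw_theta :: "nat \<Rightarrow> real \<Rightarrow> real" where
  "lw_theta n \<alpha> = ln (exp 1 + \<alpha> powr (2 / real n)) * (\<alpha> - 1) / ln \<alpha>"

text \<open>The expression whose limit as alpha tends to infinity is the long walk distance.\<close>
definition lw_expr :: "real^'n^'n \<Rightarrow> 'n \<Rightarrow> 'n \<Rightarrow> real \<Rightarrow> real" where
  "lw_expr A i j \<alpha> = (let r = lw_resolvent A \<alpha> in
     lw_theta CARD('n) \<alpha> *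
       ((ln (r $ i $ i) + ln (r $ j $ j)) / 2 - ln (r $ i $ j)))"

end

theory Submission
  imports Defs "HOL-Real_Asymp.Real_Asymp"
begin

text \<open>Put \<open>e = 1 / \<alpha>\<close> and \<open>M = \<rho> I - A\<close>. Then \<open>(I - t A)\<^sup>-\<^sup>1 = ((\<rho> + e) / e) \<cdot> e (e I + M)\<^sup>-\<^sup>1\<close>,
  and since \<open>M\<close> is symmetric, positive semidefinite and (by connectedness) has kernel spanned
  by \<open>p\<close>, one has \<open>e (e I + M)\<^sup>-\<^sup>1 = p p\<^sup>T / \<parallel>p\<parallel>\<^sup>2 + e Z + O(e\<^sup>2)\<close>, where \<open>Z\<close> inverts \<open>M\<close> on \<open>p\<^sup>\<bottom>\<close>.
  In the logarithmic combination defining the distance the factor \<open>(\<rho> + e) / e\<close> and the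
  leading terms cancel, leaving \<open>e\<close> times a quadratic form in \<open>Z\<close>; as \<open>\<theta>(\<alpha>) \<sim> 2 \<alpha> / n\<close>,
  the limit is that quadratic form. It equals the row sums of \<open>((\<rho> I - del_rc A j) P)\<^sup>-\<^sup>1\<close>,
  because zeroing row and column \<open>k\<close> of \<open>A\<close> gives an invertible matrix whose solutions,
  cut off at \<open>k\<close>, solve the corresponding systems for \<open>M\<close>.\<close>

lemma matrix_inv_mult:
  fixes B :: "'a::semiring_1^'n^'n"
  assumes "invertible B"
  shows "B ** matrix_inv B = mat 1" "matrix_inv B ** B = mat 1"
proof -
  have "\<exists>C::'a^'n^'n. B ** C = mat 1 \<and> C ** B = mat 1"
    using assms unfolding invertible_def by blast
  hence "B ** matrix_inv B = mat 1 \<and> matrix_inv B ** B = mat 1"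
    unfolding matrix_inv_def by (rule someI_ex)
  thus "B ** matrix_inv B = mat 1" "matrix_inv B ** B = mat 1" by auto
qed

lemma matrix_inv_unique:
  fixes B C :: "'a::semiring_1^'n^'n"
  assumes "B ** C = mat 1" "C ** B = mat 1"
  shows "matrix_inv B = C"
proof -
  have "invertible B" using assms unfolding invertible_def by blast
  have "matrix_inv B = matrix_inv B ** (B ** C)" using assms by simp
  also have "\<dots> = (matrix_inv B ** B) ** C" by (simp add: matrix_mul_assoc)
  also have "\<dots> = C" using matrix_inv_mult[OF \<open>invertible B\<close>] by simp
  finally show ?thesis .
qed

lemma invertible_if_kernel_zero:
  fixes B :: "'a::field^'n^'n"
  assumes "\<And>x. B *v x = 0 \<Longrightarrow> x = 0"
  shows "invertible B"
  using assms matrix_left_invertible_ker invertible_left_inverse by blast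

lemma difference_quotient_tendsto_if_quadratic_error:
  fixes Q :: "real \<Rightarrow> real"
  assumes "\<And>e. e > 0 \<Longrightarrow> \<bar>Q e - c - e * K\<bar> \<le> C * e\<^sup>2"
  shows "((\<lambda>e. (Q e - c) / e) \<longlongrightarrow> K) (at_right 0)"
proof -
  have bound: "\<bar>(Q e - c) / e - K\<bar> \<le> C * e" if "e > 0" for e
  proof -
    have "\<bar>(Q e - c) / e - K\<bar> = \<bar>Q e - c - e * K\<bar> / e"
      using that by (simp add: field_simps abs_div)
    also have "\<dots> \<le> C * e\<^sup>2 / e" using assms[OF that] that by (simp add: divide_right_mono)
    finally show ?thesis using that by (simp add: power2_eq_square)
  qed
  have "eventually (\<lambda>e. norm ((Q e - c) / e - K) \<le> C * e) (at_right 0)"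
    using eventually_at_right_less[of 0] by eventually_elim (simp add: bound)
  moreover have "((\<lambda>e. C * e) \<longlongrightarrow> 0) (at_right (0::real))"
    by (auto intro!: tendsto_eq_intros)
  ultimately have "((\<lambda>e. (Q e - c) / e - K) \<longlongrightarrow> 0) (at_right 0)"
    by (rule Lim_null_comparison)
  thus ?thesis by (rule LIM_zero_cancel)
qed

text \<open>This is the chain rule for \<open>ln \<circ> Q\<close> at \<open>0\<close>, after extending \<open>Q\<close> continuously by \<open>Q 0 = c\<close>.\<close>
lemma ln_difference_quotient_tendsto:
  fixes Q :: "real \<Rightarrow> real"
  assumes c: "c > 0" and Q: "((\<lambda>e. (Q e - c) / e) \<longlongrightarrow> K) (at_right 0)"
  shows "((\<lambda>e. (ln (Q e) - ln c) / e) \<longlongrightarrow> K / c) (at_right 0)"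
    and "eventually (\<lambda>e. Q e > 0) (at_right 0)"
proof -
  define Q0 where "Q0 = Q(0 := c)"
  have "(\<lambda>e. (Q0 e - Q0 0) / (e - 0)) = (\<lambda>e. (Q e - c) / e)"
    by (auto simp: Q0_def fun_eq_iff)
  hence deriv: "(Q0 has_field_derivative K) (at_right 0)"
    unfolding has_field_derivative_iff using Q by simp
  have Q00: "Q0 0 = c" by (simp add: Q0_def)
  have "((\<lambda>e. ln (Q0 e)) has_field_derivative inverse c * K) (at_right 0)"
    using deriv c Q00 by (auto intro!: DERIV_chain2[OF DERIV_ln])
  moreover have "(\<lambda>e. (ln (Q0 e) - ln (Q0 0)) / (e - 0)) = (\<lambda>e. (ln (Q e) - ln c) / e)"
    by (auto simp: Q0_def fun_eq_iff)
  ultimately show "((\<lambda>e. (ln (Q e) - ln c) / e) \<longlongrightarrow> K / c) (at_right 0)"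
    by (simp add: has_field_derivative_iff field_simps)
  have "(Q0 \<longlongrightarrow> c) (at_right 0)"
    using DERIV_continuous[OF deriv] Q00 by (simp add: continuous_within)
  hence "eventually (\<lambda>e. Q0 e > 0) (at_right 0)" using c by (rule order_tendstoD)
  thus "eventually (\<lambda>e. Q e > 0) (at_right 0)"
    using eventually_at_right_less[of 0] by eventually_elim (simp add: Q0_def)
qed

lemma lw_theta_div_tendsto:
  assumes "n > 0"
  shows "((\<lambda>\<alpha>. lw_theta n \<alpha> / \<alpha>) \<longlongrightarrow> 2 / real n) at_top"
proof -
  have "2 / real n > 0" using assms by simp
  hence "((\<lambda>\<alpha>. ln (exp 1 + \<alpha> powr (2 / real n)) / ln \<alpha> * ((\<alpha> - 1) / \<alpha>)) \<longlongrightarrow> 2 / real n * 1) at_top"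
    by real_asymp
  thus ?thesis by (simp add: lw_theta_def)
qed

definition vec_clear :: "'n \<Rightarrow> 'a::zero^'n \<Rightarrow> 'a^'n" where
  "vec_clear k v = (\<chi> b. if b = k then 0 else v $ b)"

lemma diag_mat_mult_vec_nth: "(diag_mat d *v x) $ a = d $ a * x $ a"
proof -
  have "(diag_mat d *v x) $ a = (\<Sum>b\<in>UNIV. (if a = b then d $ a else 0) * x $ b)"
    by (simp add: diag_mat_def matrix_vector_mult_def)
  also have "\<dots> = (\<Sum>b\<in>UNIV. if b = a then d $ a * x $ b else 0)" by (rule sum.cong) auto
  finally show ?thesis by simp
qed

locale perron_graph =
  fixes A :: "real^'n^'n" and p :: "real^'n" and \<rho> :: real
  assumes symmetric: "\<And>a b. A $ a $ b = A $ b $ a"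
    and nonneg: "\<And>a b. A $ a $ b \<ge> 0"
    and connected: "adj_connected A"
    and p_pos: "\<And>a. p $ a > 0"
    and perron_eigen: "A *v p = \<rho> *\<^sub>R p"
begin

definition M :: "real^'n^'n" where "M = \<rho> *\<^sub>R mat 1 - A"

lemma M_mult_vec_nth: "(M *v x) $ a = \<rho> * x $ a - (\<Sum>b\<in>UNIV. A $ a $ b * x $ b)"
  by (simp add: M_def matrix_vector_mult_diff_rdistrib flip: matrix_scaleR_vector_ac)
     (simp add: matrix_vector_mult_def)

lemma sum_A_mult_p: "(\<Sum>b\<in>UNIV. A $ a $ b * p $ b) = \<rho> * p $ a"
  using arg_cong[OF perron_eigen, of "\<lambda>v. v $ a"] by (simp add: matrix_vector_mult_def)

lemma sum_p_mult_A: "(\<Sum>a\<in>UNIV. p $ a * A $ a $ b) = \<rho> * p $ b"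
  using sum_A_mult_p[of b] by (simp add: symmetric mult.commute)

lemma M_mult_p: "M *v p = 0"
  by (simp add: vec_eq_iff M_mult_vec_nth sum_A_mult_p)

lemma inner_M_commute: "inner (M *v x) y = inner x (M *v y)"
proof -
  have "inner (M *v x) y = (\<Sum>a\<in>UNIV. (\<rho> * x $ a - (\<Sum>b\<in>UNIV. A $ a $ b * x $ b)) * y $ a)"
    by (simp add: inner_vec_def M_mult_vec_nth)
  also have "\<dots> = (\<Sum>a\<in>UNIV. \<rho> * x $ a * y $ a) - (\<Sum>a\<in>UNIV. \<Sum>b\<in>UNIV. A $ a $ b * x $ b * y $ a)"
    by (simp add: left_diff_distrib sum_subtractf sum_distrib_right)
  also have "(\<Sum>a\<in>UNIV. \<Sum>b\<in>UNIV. A $ a $ b * x $ b * y $ a) = (\<Sum>b\<in>UNIV. \<Sum>a\<in>UNIV. A $ b $ a * y $ a * x $ b)"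
    by (subst sum.swap) (simp add: symmetric mult_ac)
  also have "(\<Sum>a\<in>UNIV. \<rho> * x $ a * y $ a) - (\<Sum>b\<in>UNIV. \<Sum>a\<in>UNIV. A $ b $ a * y $ a * x $ b)
     = (\<Sum>b\<in>UNIV. x $ b * (\<rho> * y $ b - (\<Sum>a\<in>UNIV. A $ b $ a * y $ a)))"
    by (simp add: right_diff_distrib sum_subtractf sum_distrib_left sum_distrib_right mult_ac)
  also have "\<dots> = inner x (M *v y)" by (simp add: inner_vec_def M_mult_vec_nth)
  finally show ?thesis .
qed

lemma inner_p_M: "inner p (M *v x) = 0"
  by (simp add: inner_M_commute[symmetric] M_mult_p)

lemma quadratic_form_M:
  "2 * inner x (M *v x) =
     (\<Sum>a\<in>UNIV. \<Sum>b\<in>UNIV. A $ a $ b * p $ a * p $ b * (x $ a / p $ a - x $ b / p $ b)\<^sup>2)"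
proof -
  have summand: "A $ a $ b * p $ a * p $ b * (x $ a / p $ a - x $ b / p $ b)\<^sup>2 =
     A $ a $ b * p $ b * (x $ a ^ 2 / p $ a) + A $ a $ b * p $ a * (x $ b ^ 2 / p $ b)
      - 2 * (A $ a $ b * x $ b * x $ a)" for a b
    using p_pos[of a] p_pos[of b] by (simp add: field_simps power2_eq_square)
  have rows: "(\<Sum>a\<in>UNIV. \<Sum>b\<in>UNIV. A $ a $ b * p $ b * (x $ a ^ 2 / p $ a)) = (\<Sum>a\<in>UNIV. \<rho> * x $ a ^ 2)"
  proof (rule sum.cong[OF refl])
    fix a
    have "(\<Sum>b\<in>UNIV. A $ a $ b * p $ b * (x $ a ^ 2 / p $ a)) = x $ a ^ 2 / p $ a * (\<Sum>b\<in>UNIV. A $ a $ b * p $ b)"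
      by (simp add: sum_distrib_left mult_ac)
    thus "(\<Sum>b\<in>UNIV. A $ a $ b * p $ b * (x $ a ^ 2 / p $ a)) = \<rho> * x $ a ^ 2"
      using p_pos[of a] by (simp add: sum_A_mult_p)
  qed
  have cols: "(\<Sum>a\<in>UNIV. \<Sum>b\<in>UNIV. A $ a $ b * p $ a * (x $ b ^ 2 / p $ b)) = (\<Sum>b\<in>UNIV. \<rho> * x $ b ^ 2)"
  proof -
    have "(\<Sum>a\<in>UNIV. \<Sum>b\<in>UNIV. A $ a $ b * p $ a * (x $ b ^ 2 / p $ b))
       = (\<Sum>b\<in>UNIV. x $ b ^ 2 / p $ b * (\<Sum>a\<in>UNIV. p $ a * A $ a $ b))"
      by (subst sum.swap) (simp add: sum_distrib_left mult_ac)
    also have "\<dots> = (\<Sum>b\<in>UNIV. \<rho> * x $ b ^ 2)"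
    proof (rule sum.cong[OF refl])
      fix b show "x $ b ^ 2 / p $ b * (\<Sum>a\<in>UNIV. p $ a * A $ a $ b) = \<rho> * x $ b ^ 2"
        using p_pos[of b] by (simp add: sum_p_mult_A)
    qed
    finally show ?thesis .
  qed
  have "(\<Sum>a\<in>UNIV. \<Sum>b\<in>UNIV. A $ a $ b * p $ a * p $ b * (x $ a / p $ a - x $ b / p $ b)\<^sup>2)
    = (\<Sum>a\<in>UNIV. \<Sum>b\<in>UNIV. A $ a $ b * p $ b * (x $ a ^ 2 / p $ a))
      + (\<Sum>a\<in>UNIV. \<Sum>b\<in>UNIV. A $ a $ b * p $ a * (x $ b ^ 2 / p $ b))
      - 2 * (\<Sum>a\<in>UNIV. \<Sum>b\<in>UNIV. A $ a $ b * x $ b * x $ a)"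
    by (simp add: summand sum.distrib sum_subtractf sum_distrib_left)
  also have "\<dots> = 2 * inner x (M *v x)"
    unfolding rows cols
    by (simp add: inner_vec_def M_mult_vec_nth right_diff_distrib sum_subtractf sum_distrib_left
        sum_distrib_right mult_ac power2_eq_square)
  finally show ?thesis by simp
qed

lemma quadratic_form_M_nonneg: "inner x (M *v x) \<ge> 0"
proof -
  have "0 \<le> (\<Sum>a\<in>UNIV. \<Sum>b\<in>UNIV. A $ a $ b * p $ a * p $ b * (x $ a / p $ a - x $ b / p $ b)\<^sup>2)"
    by (intro sum_nonneg mult_nonneg_nonneg) (auto simp: nonneg less_imp_le[OF p_pos])
  thus ?thesis using quadratic_form_M[of x] by simp
qed

text \<open>If the quadratic form vanishes, \<open>x / p\<close> is constant along every edge, hence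
  constant by connectedness.\<close>
lemma M_kernel:
  assumes "M *v x = 0"
  shows "x = (x $ k / p $ k) *\<^sub>R p"
proof -
  define t where "t a b = A $ a $ b * p $ a * p $ b * (x $ a / p $ a - x $ b / p $ b)\<^sup>2" for a b
  have t_nonneg: "0 \<le> t a b" for a b
    unfolding t_def by (intro mult_nonneg_nonneg) (auto simp: nonneg less_imp_le[OF p_pos])
  have "(\<Sum>a\<in>UNIV. \<Sum>b\<in>UNIV. t a b) = 0"
    using quadratic_form_M[of x] assms unfolding t_def by simp
  hence row0: "(\<Sum>b\<in>UNIV. t a b) = 0" for a
    using sum_nonneg_eq_0_iff[OF finite_class.finite_UNIV, of "\<lambda>a. \<Sum>b\<in>UNIV. t a b"]
      sum_nonneg[of UNIV "t _", OF t_nonneg] by blast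
  have t0: "t a b = 0" for a b
    using sum_nonneg_eq_0_iff[OF finite_class.finite_UNIV, of "t a"] t_nonneg row0 by blast
  have edge: "x $ a / p $ a = x $ b / p $ b" if "A $ a $ b \<noteq> 0" for a b
  proof -
    have "A $ a $ b * p $ a * p $ b \<noteq> 0" using that p_pos[of a] p_pos[of b] by simp
    hence "(x $ a / p $ a - x $ b / p $ b)\<^sup>2 = 0" using t0[of a b] unfolding t_def by simp
    thus ?thesis by simp
  qed
  have path: "x $ a / p $ a = x $ b / p $ b" if "(a, b) \<in> {(a, b). A $ a $ b \<noteq> 0}\<^sup>*" for a b
    using that
  proof (induction rule: rtrancl_induct)
    case (step y z) thus ?case using edge[of y z] by simp
  qed simp
  define c where "c = x $ k / p $ k"
  have "x $ a = c * p $ a" for a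
  proof -
    have "x $ a / p $ a = c" using path[of a k] connected unfolding adj_connected_def c_def by blast
    thus ?thesis using p_pos[of a] by (simp add: divide_eq_eq)
  qed
  hence "x = c *\<^sub>R p" by (simp add: vec_eq_iff)
  thus ?thesis by (simp add: c_def)
qed

lemma rho_pos:
  assumes "i \<noteq> (j::'n)"
  shows "\<rho> > 0"
proof -
  have "(i, j) \<in> {(a, b). A $ a $ b \<noteq> 0}\<^sup>*" using connected unfolding adj_connected_def by blast
  then obtain y where "A $ i $ y \<noteq> 0" using assms by (cases rule: converse_rtranclE) auto
  hence "0 < A $ i $ y * p $ y" using nonneg[of i y] p_pos[of y] by simp
  also have "\<dots> \<le> (\<Sum>b\<in>UNIV. A $ i $ b * p $ b)"
    by (rule member_le_sum) (auto simp: nonneg less_imp_le[OF p_pos])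
  finally show ?thesis using p_pos[of i] by (simp add: sum_A_mult_p zero_less_mult_iff)
qed

lemma vec_eq_if_eq_off_and_inner_p_eq:
  assumes "\<And>a. a \<noteq> k \<Longrightarrow> u $ a = w $ a" and "inner p u = inner p w"
  shows "u = w"
proof -
  have rest: "(\<Sum>a\<in>UNIV - {k}. p $ a * u $ a) = (\<Sum>a\<in>UNIV - {k}. p $ a * w $ a)"
    by (rule sum.cong) (auto simp: assms(1))
  have "p $ k * u $ k = p $ k * w $ k"
    using assms(2) rest unfolding inner_vec_def by (simp add: sum.remove[of UNIV k])
  hence "u $ k = w $ k" using p_pos[of k] by simp
  thus ?thesis using assms(1) unfolding vec_eq_iff by metis
qed

definition D :: "'n \<Rightarrow> real^'n^'n" where "D k = \<rho> *\<^sub>R mat 1 - del_rc A k"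

lemma D_mult_vec_nth:
  "(D k *v v) $ a = \<rho> * v $ a - (\<Sum>b\<in>UNIV. (if a = k \<or> b = k then 0 else A $ a $ b) * v $ b)"
  by (simp add: D_def del_rc_def matrix_vector_mult_diff_rdistrib flip: matrix_scaleR_vector_ac)
     (simp add: matrix_vector_mult_def)

lemma M_mult_vec_clear_nth:
  assumes "a \<noteq> k"
  shows "(M *v vec_clear k v) $ a = (D k *v v) $ a"
proof -
  have "(\<Sum>b\<in>UNIV. A $ a $ b * vec_clear k v $ b) = (\<Sum>b\<in>UNIV. (if a = k \<or> b = k then 0 else A $ a $ b) * v $ b)"
    by (rule sum.cong) (use assms in \<open>auto simp: vec_clear_def\<close>)
  thus ?thesis using assms by (simp add: M_mult_vec_nth D_mult_vec_nth vec_clear_def)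
qed

lemma M_mult_vec_clear_eqI:
  assumes "\<And>a. a \<noteq> k \<Longrightarrow> (D k *v v) $ a = h $ a" and "inner p h = 0"
  shows "M *v vec_clear k v = h"
  by (rule vec_eq_if_eq_off_and_inner_p_eq[of k]) (simp_all add: M_mult_vec_clear_nth assms inner_p_M)

lemma D_kernel:
  assumes "\<rho> > 0" and "D k *v v = 0"
  shows "v = 0"
proof -
  have "(D k *v v) $ k = \<rho> * v $ k" by (simp add: D_mult_vec_nth)
  hence vk: "v $ k = 0" using assms by simp
  hence "vec_clear k v = v" by (auto simp: vec_clear_def vec_eq_iff)
  moreover have "M *v vec_clear k v = 0"
    by (rule M_mult_vec_clear_eqI) (simp_all add: assms)
  ultimately have "v = (v $ k / p $ k) *\<^sub>R p" using M_kernel by simp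
  thus ?thesis using vk by simp
qed

lemma invertible_D: "\<rho> > 0 \<Longrightarrow> invertible (D k)"
  by (rule invertible_if_kernel_zero) (rule D_kernel)

lemma M_range:
  assumes "\<rho> > 0" and "inner p h = 0"
  obtains z where "M *v z = h"
proof
  define k :: 'n where "k = undefined"
  have "D k *v (matrix_inv (D k) *v h) = h"
    by (simp add: matrix_vector_mul_assoc matrix_inv_mult(1)[OF invertible_D[OF assms(1)]])
  thus "M *v vec_clear k (matrix_inv (D k) *v h) = h"
    by (intro M_mult_vec_clear_eqI) (simp_all add: assms(2))
qed

definition G :: "real \<Rightarrow> real^'n^'n" where "G e = matrix_inv (e *\<^sub>R mat 1 + M)"

lemma shifted_M_mult_vec: "(e *\<^sub>R mat 1 + M) *v x = e *\<^sub>R x + M *v x"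
  by (simp add: matrix_vector_mult_add_rdistrib flip: matrix_scaleR_vector_ac)

lemma invertible_shifted_M:
  assumes "e > 0"
  shows "invertible (e *\<^sub>R mat 1 + M)"
proof (rule invertible_if_kernel_zero)
  fix x assume x: "(e *\<^sub>R mat 1 + M) *v x = 0"
  have "e * inner x x + inner x (M *v x) = inner x ((e *\<^sub>R mat 1 + M) *v x)"
    by (simp add: shifted_M_mult_vec inner_add_right)
  hence "e * inner x x + inner x (M *v x) = 0" by (simp add: x)
  hence "e * inner x x \<le> 0" using quadratic_form_M_nonneg[of x] by linarith
  hence "inner x x \<le> 0" using assms by (simp add: mult_le_0_iff)
  thus "x = 0" by (metis inner_ge_zero inner_eq_zero_iff order_antisym)
qed

lemma G_cancel:
  assumes "e > 0"
  shows "G e *v ((e *\<^sub>R mat 1 + M) *v x) = x" "(e *\<^sub>R mat 1 + M) *v (G e *v x) = x"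
  using matrix_inv_mult[OF invertible_shifted_M[OF assms]]
  by (simp_all add: G_def matrix_vector_mul_assoc)

lemma inner_G_commute:
  assumes e: "e > 0"
  shows "inner x (G e *v y) = inner (G e *v x) y"
proof -
  have "inner x (G e *v y) = inner ((e *\<^sub>R mat 1 + M) *v (G e *v x)) (G e *v y)"
    by (simp add: G_cancel[OF e])
  also have "\<dots> = inner (G e *v x) ((e *\<^sub>R mat 1 + M) *v (G e *v y))"
    by (simp add: shifted_M_mult_vec inner_add_left inner_add_right inner_M_commute)
  also have "\<dots> = inner (G e *v x) y" by (simp add: G_cancel[OF e])
  finally show ?thesis .
qed

lemma norm_G_mult_le:
  assumes e: "e > 0"
  shows "e * norm (G e *v y) \<le> norm y"
proof -
  define x where "x = G e *v y"
  have y: "y = e *\<^sub>R x + M *v x" by (simp add: x_def G_cancel[OF e] flip: shifted_M_mult_vec)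
  have "e * (norm x)\<^sup>2 \<le> e * inner x x + inner x (M *v x)"
    using quadratic_form_M_nonneg[of x] by (simp add: power2_norm_eq_inner)
  also have "\<dots> = inner x y" by (simp add: y inner_add_right)
  also have "\<dots> \<le> norm x * norm y" by (rule Cauchy_Schwarz_ineq2[THEN order_trans[OF abs_ge_self]])
  finally have "norm x * (e * norm x) \<le> norm x * norm y" by (simp add: power2_eq_square mult_ac)
  hence "e * norm x \<le> norm y \<or> norm x = 0"
    by (metis mult_le_cancel_left_pos norm_ge_zero order_le_less)
  thus ?thesis using e by (auto simp: x_def)
qed

lemma G_mult_p:
  assumes e: "e > 0"
  shows "G e *v p = (1 / e) *\<^sub>R p"
proof -
  have "p = (e *\<^sub>R mat 1 + M) *v ((1 / e) *\<^sub>R p)"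
    using e by (simp add: shifted_M_mult_vec M_mult_p matrix_vector_mult_scaleR)
  thus ?thesis by (metis G_cancel(1)[OF e])
qed

text \<open>On the range of \<open>M\<close> the matrix \<open>G e\<close> is bounded, in contrast to its \<open>1 / e\<close> pole along \<open>p\<close>.\<close>
lemma G_mult_M_image:
  assumes e: "e > 0" and z: "M *v z = h"
  shows "G e *v h = z - e *\<^sub>R (G e *v z)"
proof -
  have "e *\<^sub>R (G e *v z) + G e *v h = G e *v ((e *\<^sub>R mat 1 + M) *v z)"
    by (simp add: shifted_M_mult_vec z matrix_vector_right_distrib matrix_vector_mult_scaleR)
  also have "\<dots> = z" by (rule G_cancel[OF e])
  finally show ?thesis by (simp add: algebra_simps)
qed

definition N :: real where "N = inner p p"

lemma N_pos: "N > 0"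
proof -
  have "p \<noteq> 0" using p_pos by (metis less_irrefl zero_index)
  thus ?thesis by (simp add: N_def)
qed

definition perp :: "'n \<Rightarrow> real^'n" where "perp a = axis a 1 - (p $ a / N) *\<^sub>R p"

lemma inner_p_perp: "inner p (perp a) = 0"
  using N_pos by (simp add: perp_def inner_diff_right inner_axis N_def[symmetric])

lemma G_entry_expansion:
  assumes e: "e > 0" and za: "M *v za = perp a" and zb: "M *v zb = perp b"
  shows "G e $ a $ b = p $ a * p $ b / (N * e) + inner (perp a) zb - e * inner za zb
           + e\<^sup>2 * inner (G e *v za) zb"
proof -
  have ea: "axis a 1 = (p $ a / N) *\<^sub>R p + perp a" and eb: "axis b 1 = (p $ b / N) *\<^sub>R p + perp b"
    by (simp_all add: perp_def)
  have Gb: "G e *v axis b 1 = (p $ b / (N * e)) *\<^sub>R p + G e *v perp b"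
    by (subst eb) (simp add: matrix_vector_right_distrib matrix_vector_mult_scaleR G_mult_p[OF e])
  have p_G_perp: "inner p (G e *v perp b) = 0"
    using inner_G_commute[OF e, of p "perp b"] G_mult_p[OF e] inner_p_perp[of b] by simp
  have perp_p: "inner (perp a) p = 0" using inner_p_perp[of a] by (simp add: inner_commute)
  have perp_G_zb: "inner (perp a) (G e *v zb) = inner za zb - e * inner (G e *v za) zb"
    using inner_G_commute[OF e, of "perp a" zb] G_mult_M_image[OF e za] by (simp add: inner_diff_left)
  have "inner (perp a) (G e *v perp b) = inner (perp a) zb - e * inner (perp a) (G e *v zb)"
    by (simp add: G_mult_M_image[OF e zb] inner_diff_right)
  also have "\<dots> = inner (perp a) zb - e * inner za zb + e\<^sup>2 * inner (G e *v za) zb"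
    by (simp only: perp_G_zb) (simp add: algebra_simps power2_eq_square)
  finally have perp_G_perp: "inner (perp a) (G e *v perp b) = \<dots>" .
  have "G e $ a $ b = inner (axis a 1) (G e *v axis b 1)"
    by (simp add: matrix_vector_mult_basis column_def inner_axis')
  thus ?thesis
    using N_pos unfolding ea Gb
    by (simp add: inner_add_left inner_add_right p_G_perp perp_p perp_G_perp N_def[symmetric] field_simps)
qed

lemma scaled_G_entry_error:
  assumes e: "e > 0" and za: "M *v za = perp a" and zb: "M *v zb = perp b"
  shows "\<bar>e * G e $ a $ b - p $ a * p $ b / N - e * inner (perp a) zb\<bar> \<le> 2 * norm za * norm zb * e\<^sup>2"
proof -
  define r where "r = e * inner (G e *v za) zb - inner za zb"
  have eq: "e * G e $ a $ b - p $ a * p $ b / N - e * inner (perp a) zb = e\<^sup>2 * r"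
    using e N_pos unfolding r_def G_entry_expansion[OF e za zb] by (simp add: field_simps power2_eq_square)
  moreover have "\<bar>e * inner (G e *v za) zb\<bar> \<le> norm za * norm zb"
  proof -
    have "\<bar>e * inner (G e *v za) zb\<bar> \<le> (e * norm (G e *v za)) * norm zb"
      using e Cauchy_Schwarz_ineq2[of "G e *v za" zb] by (simp add: abs_mult)
    also have "\<dots> \<le> norm za * norm zb"
      using norm_G_mult_le[OF e, of za] by (intro mult_right_mono) auto
    finally show ?thesis .
  qed
  moreover have "\<bar>inner za zb\<bar> \<le> norm za * norm zb" by (rule Cauchy_Schwarz_ineq2)
  ultimately have "\<bar>r\<bar> \<le> 2 * norm za * norm zb" unfolding r_def by linarith
  hence "e\<^sup>2 * \<bar>r\<bar> \<le> e\<^sup>2 * (2 * norm za * norm zb)" by (rule mult_left_mono) simp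
  thus ?thesis unfolding eq by (simp add: abs_mult mult_ac)
qed

lemma ln_scaled_G_entry_tendsto:
  assumes za: "M *v za = perp a" and zb: "M *v zb = perp b"
  shows "((\<lambda>e. (ln (e * G e $ a $ b) - ln (p $ a * p $ b / N)) / e)
           \<longlongrightarrow> N * inner (perp a) zb / (p $ a * p $ b)) (at_right 0)"
    and "eventually (\<lambda>e. e * G e $ a $ b > 0) (at_right 0)"
proof -
  have c: "p $ a * p $ b / N > 0" using N_pos p_pos[of a] p_pos[of b] by simp
  note quotient = difference_quotient_tendsto_if_quadratic_error[OF scaled_G_entry_error[OF _ za zb]]
  show "eventually (\<lambda>e. e * G e $ a $ b > 0) (at_right 0)"
    by (rule ln_difference_quotient_tendsto(2)[OF c quotient])
  show "((\<lambda>e. (ln (e * G e $ a $ b) - ln (p $ a * p $ b / N)) / e)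
           \<longlongrightarrow> N * inner (perp a) zb / (p $ a * p $ b)) (at_right 0)"
    using ln_difference_quotient_tendsto(1)[OF c quotient] by (simp add: mult.commute)
qed

lemma row_sum_D_inverse:
  assumes "\<rho> > 0"
  obtains v where "D k *v v = (\<chi> a. 1)"
    and "\<And>a. (\<Sum>l\<in>UNIV. matrix_inv (D k ** diag_mat p) $ a $ l) = v $ a / p $ a"
proof
  define V where "V = matrix_inv (D k ** diag_mat p)"
  have "invertible (D k ** diag_mat p)"
  proof (rule invertible_if_kernel_zero)
    fix x assume "(D k ** diag_mat p) *v x = 0"
    hence "diag_mat p *v x = 0"
      using D_kernel[OF assms] by (simp add: matrix_vector_mul_assoc)
    thus "x = 0" using p_pos by (simp add: vec_eq_iff diag_mat_mult_vec_nth) (metis less_irrefl)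
  qed
  thus "D k *v (diag_mat p *v (V *v (\<chi> a. 1))) = (\<chi> a. 1)"
    by (simp add: V_def matrix_vector_mul_assoc matrix_mul_assoc matrix_inv_mult(1))
  fix a
  show "(\<Sum>l\<in>UNIV. matrix_inv (D k ** diag_mat p) $ a $ l) = (diag_mat p *v (V *v (\<chi> a. 1))) $ a / p $ a"
    using p_pos[of a] by (simp add: V_def diag_mat_mult_vec_nth) (simp add: matrix_vector_mult_def)
qed

lemma M_mult_vec_clear_ones:
  assumes "(\<Sum>a\<in>UNIV. p $ a) = 1" and "D k *v v = (\<chi> a. 1)"
  shows "M *v vec_clear k v = (\<chi> a. 1) - (1 / p $ k) *\<^sub>R axis k 1"
proof (rule M_mult_vec_clear_eqI)
  show "(D k *v v) $ a = ((\<chi> a. 1) - (1 / p $ k) *\<^sub>R axis k 1) $ a" if "a \<noteq> k" for a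
    using that by (simp add: assms(2) axis_def)
  have "inner p (\<chi> a. 1) = 1" using assms(1) by (simp add: inner_vec_def)
  thus "inner p ((\<chi> a. 1) - (1 / p $ k) *\<^sub>R axis k 1) = 0"
    using p_pos[of k] by (simp add: inner_diff_right inner_axis)
qed

text \<open>Pairing \<open>M \<xi> = w\<close> with a second solution \<open>\<zeta>\<close> built from \<open>zi, zj\<close> gives
  \<open>\<langle>w, \<xi>\<rangle> = \<langle>M \<zeta>, \<xi>\<rangle> = \<langle>\<zeta>, M \<xi>\<rangle> = \<langle>\<zeta>, w\<rangle>\<close> by symmetry of \<open>M\<close>.\<close>
lemma dipole_solution_value:
  assumes zi: "M *v zi = perp i" and zj: "M *v zj = perp j"
    and \<xi>: "M *v \<xi> = (1 / p $ i) *\<^sub>R axis i 1 - (1 / p $ j) *\<^sub>R axis j 1"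
  shows "\<xi> $ i / p $ i - \<xi> $ j / p $ j = inner (perp i) zi / (p $ i * p $ i)
           + inner (perp j) zj / (p $ j * p $ j) - 2 * inner (perp i) zj / (p $ i * p $ j)"
proof -
  define w where "w = (1 / p $ i) *\<^sub>R axis i 1 - (1 / p $ j) *\<^sub>R axis j (1::real)"
  define \<zeta> where "\<zeta> = (1 / p $ i) *\<^sub>R zi - (1 / p $ j) *\<^sub>R zj"
  have w_perp: "w = (1 / p $ i) *\<^sub>R perp i - (1 / p $ j) *\<^sub>R perp j"
    using p_pos[of i] p_pos[of j] by (simp add: w_def perp_def vec_eq_iff field_simps)
  have M\<zeta>: "M *v \<zeta> = w"
    by (simp add: \<zeta>_def w_perp matrix_vector_mult_diff_distrib matrix_vector_mult_scaleR zi zj)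
  have "\<xi> $ i / p $ i - \<xi> $ j / p $ j = inner w \<xi>"
    by (simp add: w_def inner_diff_left inner_axis')
  also have "\<dots> = inner \<zeta> (M *v \<xi>)" by (simp add: M\<zeta>[symmetric] inner_M_commute)
  also have "\<dots> = inner \<zeta> w" by (simp add: \<xi> w_def)
  also have "inner (perp j) zi = inner (perp i) zj"
    using inner_M_commute[of zj zi] by (simp add: zi zj inner_commute)
  hence "inner \<zeta> w = inner (perp i) zi / (p $ i * p $ i)
           + inner (perp j) zj / (p $ j * p $ j) - 2 * inner (perp i) zj / (p $ i * p $ j)"
    unfolding w_perp \<zeta>_def using p_pos[of i] p_pos[of j]
    by (simp add: inner_diff_left inner_diff_right inner_commute[of zj] inner_commute[of zi] field_simps)
  finally show ?thesis .
qed

lemma row_sums_D_inverse: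
  assumes "\<rho> > 0" and "(\<Sum>a\<in>UNIV. p $ a) = 1" and "i \<noteq> j"
    and zi: "M *v zi = perp i" and zj: "M *v zj = perp j"
  shows "(\<Sum>l\<in>UNIV. matrix_inv (D j ** diag_mat p) $ i $ l) + (\<Sum>l\<in>UNIV. matrix_inv (D i ** diag_mat p) $ j $ l)
    = inner (perp i) zi / (p $ i * p $ i) + inner (perp j) zj / (p $ j * p $ j)
      - 2 * inner (perp i) zj / (p $ i * p $ j)"
proof -
  obtain v where v: "D j *v v = (\<chi> a. 1)"
    and row_i: "(\<Sum>l\<in>UNIV. matrix_inv (D j ** diag_mat p) $ i $ l) = v $ i / p $ i"
    using row_sum_D_inverse[OF assms(1)] by metis
  obtain u where u: "D i *v u = (\<chi> a. 1)"
    and row_j: "(\<Sum>l\<in>UNIV. matrix_inv (D i ** diag_mat p) $ j $ l) = u $ j / p $ j"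
    using row_sum_D_inverse[OF assms(1)] by metis
  define \<xi> where "\<xi> = vec_clear j v - vec_clear i u"
  have "M *v \<xi> = (1 / p $ i) *\<^sub>R axis i 1 - (1 / p $ j) *\<^sub>R axis j 1"
    by (simp add: \<xi>_def matrix_vector_mult_diff_distrib M_mult_vec_clear_ones[OF assms(2) v]
        M_mult_vec_clear_ones[OF assms(2) u])
  from dipole_solution_value[OF zi zj this] show ?thesis
    using assms(3) by (simp add: \<xi>_def vec_clear_def row_i row_j)
qed

lemma resolvent_eq_G:
  assumes "\<rho> > 0" and e: "e > 0"
  shows "matrix_inv (mat 1 - inverse (\<rho> + e) *\<^sub>R A) = (\<rho> + e) *\<^sub>R G e"
proof -
  define s where "s = \<rho> + e"
  have s: "s > 0" using assms by (simp add: s_def)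
  have "e *\<^sub>R mat 1 + M = s *\<^sub>R mat 1 - A" by (simp add: M_def s_def scaleR_add_left algebra_simps)
  hence shifted: "mat 1 - inverse s *\<^sub>R A = inverse s *\<^sub>R (e *\<^sub>R mat 1 + M)"
    using s by (simp add: scaleR_diff_right)
  have "(inverse s *\<^sub>R (e *\<^sub>R mat 1 + M)) ** (s *\<^sub>R G e) = mat 1"
    "(s *\<^sub>R G e) ** (inverse s *\<^sub>R (e *\<^sub>R mat 1 + M)) = mat 1"
    using s matrix_inv_mult[OF invertible_shifted_M[OF e]]
    by (simp_all add: G_def matrix_scalar_ac flip: scalar_matrix_assoc)
  thus ?thesis unfolding shifted s_def[symmetric] by (rule matrix_inv_unique)
qed

text \<open>The constants \<open>ln (p\<^sub>a p\<^sub>b / N)\<close> cancel in the combination, so only the first-order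
  terms of the three logarithms survive.\<close>
lemma ln_scaled_G_combination_tendsto:
  assumes "i \<noteq> j" and psum: "(\<Sum>a\<in>UNIV. p $ a) = 1"
  shows "((\<lambda>e. ((ln (e * G e $ i $ i) + ln (e * G e $ j $ j)) / 2 - ln (e * G e $ i $ j)) / e)
    \<longlongrightarrow> N / 2 * ((\<Sum>l\<in>UNIV. matrix_inv (D j ** diag_mat p) $ i $ l)
                   + (\<Sum>l\<in>UNIV. matrix_inv (D i ** diag_mat p) $ j $ l))) (at_right 0)"
proof -
  have \<rho>: "\<rho> > 0" using rho_pos[OF assms(1)] .
  obtain zi where zi: "M *v zi = perp i" using M_range[OF \<rho> inner_p_perp] by blast
  obtain zj where zj: "M *v zj = perp j" using M_range[OF \<rho> inner_p_perp] by blast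
  define L where "L a b e = (ln (e * G e $ a $ b) - ln (p $ a * p $ b / N)) / e" for a b e
  have "((ln (e * G e $ i $ i) + ln (e * G e $ j $ j)) / 2 - ln (e * G e $ i $ j)) / e
    = (L i i e + L j j e) / 2 - L i j e
      + ((ln (p $ i * p $ i / N) + ln (p $ j * p $ j / N)) / 2 - ln (p $ i * p $ j / N)) / e" for e
    unfolding L_def by (cases "e = 0") (simp_all add: field_simps)
  moreover have "(ln (p $ i * p $ i / N) + ln (p $ j * p $ j / N)) / 2 - ln (p $ i * p $ j / N) = 0"
    using N_pos p_pos[of i] p_pos[of j] by (simp add: ln_div ln_mult)
  moreover have "((\<lambda>e. (L i i e + L j j e) / 2 - L i j e) \<longlongrightarrow>
      (N * inner (perp i) zi / (p $ i * p $ i) + N * inner (perp j) zj / (p $ j * p $ j)) / 2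
      - N * inner (perp i) zj / (p $ i * p $ j)) (at_right 0)"
    unfolding L_def
    by (intro ln_scaled_G_entry_tendsto(1)[OF zi zi] ln_scaled_G_entry_tendsto(1)[OF zj zj]
        ln_scaled_G_entry_tendsto(1)[OF zi zj] tendsto_diff tendsto_add tendsto_divide tendsto_const) simp
  moreover have "(N * inner (perp i) zi / (p $ i * p $ i) + N * inner (perp j) zj / (p $ j * p $ j)) / 2
      - N * inner (perp i) zj / (p $ i * p $ j)
    = N / 2 * ((\<Sum>l\<in>UNIV. matrix_inv (D j ** diag_mat p) $ i $ l)
               + (\<Sum>l\<in>UNIV. matrix_inv (D i ** diag_mat p) $ j $ l))"
    unfolding row_sums_D_inverse[OF \<rho> psum assms(1) zi zj] using p_pos[of i] p_pos[of j]
    by (simp add: field_simps)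
  ultimately show ?thesis by simp
qed

lemma scaled_G_entry_eventually_pos:
  assumes "\<rho> > 0"
  shows "eventually (\<lambda>e. e * G e $ a $ b > 0) (at_right 0)"
proof -
  obtain za where "M *v za = perp a" using M_range[OF assms inner_p_perp] by blast
  moreover obtain zb where "M *v zb = perp b" using M_range[OF assms inner_p_perp] by blast
  ultimately show ?thesis by (rule ln_scaled_G_entry_tendsto(2))
qed

lemma ln_resolvent_combination_eq:
  assumes \<rho>: "\<rho> > 0" and e: "e > 0"
    and pos: "e * G e $ i $ i > 0" "e * G e $ j $ j > 0" "e * G e $ i $ j > 0"
  shows "(let r = matrix_inv (mat 1 - inverse (\<rho> + e) *\<^sub>R A) in
            (ln (r $ i $ i) + ln (r $ j $ j)) / 2 - ln (r $ i $ j))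
       = (ln (e * G e $ i $ i) + ln (e * G e $ j $ j)) / 2 - ln (e * G e $ i $ j)"
proof -
  have "(\<rho> + e) / e > 0" using e \<rho> by simp
  hence "ln (matrix_inv (mat 1 - inverse (\<rho> + e) *\<^sub>R A) $ a $ b) = ln ((\<rho> + e) / e) + ln (e * G e $ a $ b)"
    if "e * G e $ a $ b > 0" for a b
    using that e by (simp add: resolvent_eq_G[OF \<rho> e] ln_mult_pos[symmetric])
  thus ?thesis using pos by (simp add: Let_def field_simps)
qed

lemma lw_expr_tendsto:
  assumes "i \<noteq> j" and "(\<Sum>a\<in>UNIV. p $ a) = 1"
  shows "((\<lambda>\<alpha>. let r = matrix_inv (mat 1 - inverse (\<rho> + inverse \<alpha>) *\<^sub>R A) in
             lw_theta CARD('n) \<alpha> * ((ln (r $ i $ i) + ln (r $ j $ j)) / 2 - ln (r $ i $ j)))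
    \<longlongrightarrow> N / real CARD('n) * ((\<Sum>l\<in>UNIV. matrix_inv (D j ** diag_mat p) $ i $ l)
                                + (\<Sum>l\<in>UNIV. matrix_inv (D i ** diag_mat p) $ j $ l))) at_top"
proof -
  have \<rho>: "\<rho> > 0" using rho_pos[OF assms(1)] .
  define S where "S = (\<Sum>l\<in>UNIV. matrix_inv (D j ** diag_mat p) $ i $ l)
                      + (\<Sum>l\<in>UNIV. matrix_inv (D i ** diag_mat p) $ j $ l)"
  define F where "F e = (ln (e * G e $ i $ i) + ln (e * G e $ j $ j)) / 2 - ln (e * G e $ i $ j)" for e
  have "((\<lambda>\<alpha>. F (inverse \<alpha>) / inverse \<alpha>) \<longlongrightarrow> N / 2 * S) at_top"
    using ln_scaled_G_combination_tendsto[OF assms]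
    unfolding filterlim_at_top_to_right F_def S_def by simp
  with lw_theta_div_tendsto[of "CARD('n)"]
  have "((\<lambda>\<alpha>. lw_theta CARD('n) \<alpha> / \<alpha> * (F (inverse \<alpha>) / inverse \<alpha>)) \<longlongrightarrow>
          2 / real CARD('n) * (N / 2 * S)) at_top"
    by (intro tendsto_mult) simp_all
  moreover have "eventually (\<lambda>\<alpha>. \<alpha> > 0 \<and> inverse \<alpha> * G (inverse \<alpha>) $ i $ i > 0
      \<and> inverse \<alpha> * G (inverse \<alpha>) $ j $ j > 0 \<and> inverse \<alpha> * G (inverse \<alpha>) $ i $ j > 0) at_top"
    using scaled_G_entry_eventually_pos[OF \<rho>] unfolding eventually_at_right_to_top
    by (intro eventually_conj eventually_gt_at_top)
  hence "eventually (\<lambda>\<alpha>. lw_theta CARD('n) \<alpha> / \<alpha> * (F (inverse \<alpha>) / inverse \<alpha>) =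
      (let r = matrix_inv (mat 1 - inverse (\<rho> + inverse \<alpha>) *\<^sub>R A) in
        lw_theta CARD('n) \<alpha> * ((ln (r $ i $ i) + ln (r $ j $ j)) / 2 - ln (r $ i $ j)))) at_top"
  proof eventually_elim
    case (elim \<alpha>)
    hence "F (inverse \<alpha>) = (let r = matrix_inv (mat 1 - inverse (\<rho> + inverse \<alpha>) *\<^sub>R A) in
        (ln (r $ i $ i) + ln (r $ j $ j)) / 2 - ln (r $ i $ j))"
      unfolding F_def by (intro ln_resolvent_combination_eq[OF \<rho>, symmetric]) simp_all
    thus ?case using elim by (simp add: Let_def)
  qed
  ultimately have "((\<lambda>\<alpha>. let r = matrix_inv (mat 1 - inverse (\<rho> + inverse \<alpha>) *\<^sub>R A) in
             lw_theta CARD('n) \<alpha> * ((ln (r $ i $ i) + ln (r $ j $ j)) / 2 - ln (r $ i $ j)))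
    \<longlongrightarrow> 2 / real CARD('n) * (N / 2 * S)) at_top"
    by (rule Lim_transform_eventually)
  thus ?thesis by (simp add: S_def)
qed

end

theorem corollary9:
  fixes A :: "real^'n^'n" and p :: "real^'n" and i j :: 'n
  assumes n2: "CARD('n) \<ge> 2"
    and sym: "transpose A = A"
    and nonneg: "\<forall>a b. A $ a $ b \<ge> 0"
    and conn: "adj_connected A"
    and p_pos: "\<forall>a. p $ a > 0"
    and p_sum: "(\<Sum>a\<in>UNIV. p $ a) = 1"
    and p_eig: "A *v p = spec_radius A *\<^sub>R p"
    and ij: "i \<noteq> j"
  shows "(lw_expr A i j \<longlongrightarrow>
           (norm p)\<^sup>2 / real CARD('n) *
             ((\<Sum>k\<in>UNIV. matrix_inv ((spec_radius A *\<^sub>R mat 1 - del_rc A j) ** diag_mat p) $ i $ k)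
            + (\<Sum>k\<in>UNIV. matrix_inv ((spec_radius A *\<^sub>R mat 1 - del_rc A i) ** diag_mat p) $ j $ k)))
         at_top"
proof -
  have "A $ a $ b = A $ b $ a" for a b
    using arg_cong[OF sym, of "\<lambda>B. B $ b $ a"] by (simp add: transpose_def)
  then interpret perron_graph A p "spec_radius A"
    using nonneg conn p_pos p_eig by unfold_locales auto
  have "N = (norm p)\<^sup>2" by (simp add: N_def power2_norm_eq_inner)
  with lw_expr_tendsto[OF ij p_sum] show ?thesis
    unfolding lw_expr_def lw_resolvent_def D_def by simp
qed

end
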